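(* Let $(G,* )$ be a topological group which has property ${\sf S}_c(\mathcal{O}_{\sf nbd},\mathcal{O})$ as well as the Hurewicz property. Then for any topological group $(H,* )$ satisfying ${\sf S}_c(\mathcal{O}_{\sf nbd},\Lambda)$, the product group $G\times H$ satisfies ${\sf S}_c(\mathcal{O}_{\sf nbd},\mathcal{O})$.
   Context: For a topological group $(G,* )$ with identity $e$ and a neighborhood $U$ of $e$, $\mathcal{O}(U)=\{x*U:x\in G\}$ and $\mathcal{O}_{\sf nbd}=\{\mathcal{O}(U):U\text{ a neighborhood of }e\}$. $\mathcal{O}$ is the collection of all open covers. An open cover is large if each point of the space is contained in infinitely many elements of the cover; $\Lambda$ denotes the collection of large open covers. A family $\mathcal{B}$ refines $\mathcal{A}$ if every member of $\mathcal{B}$ is contained in some member of $\mathcal{A}$. ${\sf S}_c(\mathcal{A},\mathcal{B})$: for each sequence $(A_n:n<\infty)$ of elements of $\mathcal{A}$ there is a sequence $(B_n:n<\infty)$ such that each $B_n$ is a pairwise disjoint family of open sets refining $A_n$ and $\bigcup_nB_n\in\mathcal{B}$. A space $X$ has the Hurewicz property if for each sequence $(\mathcal{U}_n:n<\infty)$ of open covers of $X$ there are finite $\mathcal{F}_n\subseteq\mathcal{U}_n$ such that for each $x\in X$ the set $\{n:x\notin\bigcup\mathcal{F}_n\}$ is finite. *)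

theory Defs
  imports "HOL-Analysis.Analysis"
begin

definition topological_group ::
  "'a topology \<Rightarrow> ('a \<Rightarrow> 'a \<Rightarrow> 'a) \<Rightarrow> 'a \<Rightarrow> ('a \<Rightarrow> 'a) \<Rightarrow> bool" where
  "topological_group X m e i \<longleftrightarrow>
     e \<in> topspace X \<and>
     (\<forall>x\<in>topspace X. \<forall>y\<in>topspace X. m x y \<in> topspace X) \<and>
     (\<forall>x\<in>topspace X. i x \<in> topspace X) \<and>
     (\<forall>x\<in>topspace X. \<forall>y\<in>topspace X. \<forall>z\<in>topspace X. m (m x y) z = m x (m y z)) \<and>
     (\<forall>x\<in>topspace X. m e x = x \<and> m x e = x) \<and>
     (\<forall>x\<in>topspace X. m (i x) x = e \<and> m x (i x) = e) \<and>
     continuous_map (prod_topology X X) X (\<lambda>(x, y). m x y) \<and>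
     continuous_map X X i"

definition nbhd :: "'a topology \<Rightarrow> 'a \<Rightarrow> 'a set \<Rightarrow> bool" where
  "nbhd X p U \<longleftrightarrow> U \<subseteq> topspace X \<and> (\<exists>V. openin X V \<and> p \<in> V \<and> V \<subseteq> U)"

definition open_cover :: "'a topology \<Rightarrow> 'a set set \<Rightarrow> bool" where
  "open_cover X \<U> \<longleftrightarrow> (\<forall>U\<in>\<U>. openin X U) \<and> topspace X \<subseteq> \<Union>\<U>"

definition large_cover :: "'a topology \<Rightarrow> 'a set set \<Rightarrow> bool" where
  "large_cover X \<U> \<longleftrightarrow> open_cover X \<U> \<and>
     (\<forall>x\<in>topspace X. infinite {U \<in> \<U>. x \<in> U})"

text \<open>The family
O(U) = {x*U : x in G}; B_n refines O(U_n) means each member of B_n lies in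
some translate x*U_n.\<close>
definition Sc_nbd :: "'a topology \<Rightarrow> ('a \<Rightarrow> 'a \<Rightarrow> 'a) \<Rightarrow> 'a \<Rightarrow> ('a set set \<Rightarrow> bool) \<Rightarrow> bool" where
  "Sc_nbd X m e \<B> \<longleftrightarrow>
     (\<forall>U :: nat \<Rightarrow> 'a set. (\<forall>n. nbhd X e (U n)) \<longrightarrow>
        (\<exists>B :: nat \<Rightarrow> 'a set set.
           (\<forall>n. pairwise disjnt (B n)) \<and>
           (\<forall>n. \<forall>V\<in>B n. openin X V) \<and>
           (\<forall>n. \<forall>V\<in>B n. \<exists>x\<in>topspace X. V \<subseteq> (m x) ` (U n)) \<and>
           \<B> (\<Union>n. B n)))"

definition hurewicz :: "'a topology \<Rightarrow> bool" where
  "hurewicz X \<longleftrightarrow>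
     (\<forall>\<U> :: nat \<Rightarrow> 'a set set. (\<forall>n. open_cover X (\<U> n)) \<longrightarrow>
        (\<exists>\<F> :: nat \<Rightarrow> 'a set set. (\<forall>n. finite (\<F> n) \<and> \<F> n \<subseteq> \<U> n) \<and>
           (\<forall>x\<in>topspace X. finite {n. x \<notin> \<Union>(\<F> n)})))"

definition prod_mult :: "('a \<Rightarrow> 'a \<Rightarrow> 'a) \<Rightarrow> ('b \<Rightarrow> 'b \<Rightarrow> 'b) \<Rightarrow> 'a \<times> 'b \<Rightarrow> 'a \<times> 'b \<Rightarrow> 'a \<times> 'b" where
  "prod_mult m1 m2 = (\<lambda>(x1, x2) (y1, y2). (m1 x1 y1, m2 x2 y2))"

end

theory Submission
  imports Defs
begin

(* Given neighbourhoods W n of the identity of G x H, shrink each to an open box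
   U n x V n and view the index n as a pair (m, j) via prod_encode.  For every row m,
   S_c(O_nbd, O) in G yields disjoint open families D m j, refining the translates of
   U <m,j>, whose union covers G; the Hurewicz property yields bounds J m such that
   each point of G is covered by D m 0, ..., D m (J m) for all but finitely many m.
   S_c(O_nbd, Lambda) in H, applied to V' m = the intersection of the V <m,j> with
   j <= J m, yields disjoint families C m forming a large cover; since each C m is
   disjoint, every point of H meets C m for infinitely many m.  Stage <m,j> of the
   required sequence consists of the boxes A x E with A in D m j (j <= J m) and E in
   C m: they are disjoint, refine the translates of W <m,j>, and every point lies in
   one of them for any of the infinitely many m good for both coordinates. *)

lemma nbhd_openin: "openin X U \<Longrightarrow> p \<in> U \<Longrightarrow> nbhd X p U"
  unfolding nbhd_def using openin_subset by blast

lemma nbhd_prod_contains_box: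
  assumes "nbhd (prod_topology X Y) (p, q) W"
  obtains U V where "openin X U" "openin Y V" "p \<in> U" "q \<in> V" "U \<times> V \<subseteq> W"
proof -
  obtain Q where Q: "openin (prod_topology X Y) Q" "(p, q) \<in> Q" "Q \<subseteq> W"
    using assms unfolding nbhd_def by blast
  obtain U V where UV: "openin X U" "openin Y V" "p \<in> U" "q \<in> V" "U \<times> V \<subseteq> Q"
    using openin_prod_topology_alt[THEN iffD1, OF Q(1), rule_format, OF Q(2)] by blast
  show thesis by (rule that[OF UV(1-4) order_trans[OF UV(5) Q(3)]])
qed

lemma nbhd_prod_contains_boxes:
  assumes "\<And>n. nbhd (prod_topology X Y) (p, q) (W n)"
  obtains U V where "\<And>n. openin X (U n) \<and> p \<in> U n" "\<And>n. openin Y (V n) \<and> q \<in> V n"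
    "\<And>n. U n \<times> V n \<subseteq> W n"
proof -
  have "\<forall>n. \<exists>UV. openin X (fst UV) \<and> openin Y (snd UV) \<and> p \<in> fst UV \<and> q \<in> snd UV
      \<and> fst UV \<times> snd UV \<subseteq> W n"
  proof
    fix n
    obtain U V where "openin X U" "openin Y V" "p \<in> U" "q \<in> V" "U \<times> V \<subseteq> W n"
      using nbhd_prod_contains_box[OF assms] .
    then show "\<exists>UV. openin X (fst UV) \<and> openin Y (snd UV) \<and> p \<in> fst UV \<and> q \<in> snd UV
      \<and> fst UV \<times> snd UV \<subseteq> W n" by (intro exI[of _ "(U, V)"]) auto
  qed
  then obtain UV where "\<forall>n. openin X (fst (UV n)) \<and> openin Y (snd (UV n)) \<and> p \<in> fst (UV n)
      \<and> q \<in> snd (UV n) \<and> fst (UV n) \<times> snd (UV n) \<subseteq> W n"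
    by (rule choice[THEN exE])
  then show thesis using that[of "\<lambda>n. fst (UV n)" "\<lambda>n. snd (UV n)"] by blast
qed

lemma Sc_nbdE:
  fixes U :: "nat \<Rightarrow> 'a set"
  assumes "Sc_nbd X m e P" and "\<And>n. nbhd X e (U n)"
  obtains B where "\<And>n. pairwise disjnt (B n)" "\<And>n A. A \<in> B n \<Longrightarrow> openin X A"
    "\<And>n A. A \<in> B n \<Longrightarrow> \<exists>x\<in>topspace X. A \<subseteq> m x ` U n" "P (\<Union>n. B n)"
proof -
  from assms(1)[unfolded Sc_nbd_def, rule_format, OF assms(2)]
  obtain B where "(\<forall>n. pairwise disjnt (B n)) \<and> (\<forall>n. \<forall>A\<in>B n. openin X A) \<and>
    (\<forall>n. \<forall>A\<in>B n. \<exists>x\<in>topspace X. A \<subseteq> m x ` U n) \<and> P (\<Union>n. B n)" ..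
  then show thesis using that[of B] by blast
qed

lemma Sc_nbd_rowsE:
  fixes U :: "nat \<Rightarrow> nat \<Rightarrow> 'a set"
  assumes Sc: "Sc_nbd X m e P" and nbhds: "\<And>k j. nbhd X e (U k j)"
  obtains D where "\<And>k j. pairwise disjnt (D k j)" "\<And>k j A. A \<in> D k j \<Longrightarrow> openin X A"
    "\<And>k j A. A \<in> D k j \<Longrightarrow> \<exists>x\<in>topspace X. A \<subseteq> m x ` U k j" "\<And>k. P (\<Union>j. D k j)"
proof -
  have "\<forall>k. \<exists>B. (\<forall>j. pairwise disjnt (B j)) \<and> (\<forall>j. \<forall>A\<in>B j. openin X A) \<and>
      (\<forall>j. \<forall>A\<in>B j. \<exists>x\<in>topspace X. A \<subseteq> m x ` U k j) \<and> P (\<Union>j. B j)"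
    using Sc[unfolded Sc_nbd_def, rule_format, OF nbhds] by (rule allI)
  then obtain D where "\<forall>k. (\<forall>j. pairwise disjnt (D k j)) \<and> (\<forall>j. \<forall>A\<in>D k j. openin X A) \<and>
      (\<forall>j. \<forall>A\<in>D k j. \<exists>x\<in>topspace X. A \<subseteq> m x ` U k j) \<and> P (\<Union>j. D k j)"
    by (rule choice[THEN exE])
  then show thesis using that[of D] by blast
qed

text \<open>If for each m the open sets Q m j (j = 0, 1, ...) cover X, the Hurewicz property
  gives bounds J m such that each point lies in one of Q m 0, ..., Q m (J m) for all but
  finitely many m.  (Apply Hurewicz to the covers by the increasing finite unions.)\<close>

lemma hurewicz_uniform_stages:
  fixes Q :: "nat \<Rightarrow> nat \<Rightarrow> 'a set"
  assumes hur: "hurewicz X" and open_Q: "\<And>m j. openin X (Q m j)"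
    and cover_Q: "\<And>m. topspace X \<subseteq> (\<Union>j. Q m j)"
  obtains J where "\<And>x. x \<in> topspace X \<Longrightarrow> finite {m. x \<notin> (\<Union>j\<le>J m. Q m j)}"
proof -
  define S where "S m K = (\<Union>j\<le>K. Q m j)" for m K
  have "open_cover X (range (S m))" for m
    unfolding open_cover_def
  proof
    show "\<forall>A\<in>range (S m). openin X A"
      unfolding S_def using open_Q by (auto intro!: openin_Union)
    show "topspace X \<subseteq> \<Union>(range (S m))"
    proof
      fix x assume "x \<in> topspace X"
      then obtain j where "x \<in> Q m j" using cover_Q by blast
      then have "x \<in> S m j" unfolding S_def by blast
      then show "x \<in> \<Union>(range (S m))" by blast
    qed
  qed
  then obtain F where F: "\<forall>m. finite (F m) \<and> F m \<subseteq> range (S m)"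
    and few: "\<forall>x\<in>topspace X. finite {m. x \<notin> \<Union>(F m)}"
    using hur[unfolded hurewicz_def, rule_format, of "\<lambda>m. range (S m)"] by blast
  have "\<forall>m. \<exists>K. finite K \<and> F m = S m ` K"
  proof
    fix m show "\<exists>K. finite K \<and> F m = S m ` K"
      using F finite_subset_image[of "F m" "S m" UNIV] by blast
  qed
  then obtain K where K: "\<forall>m. finite (K m) \<and> F m = S m ` K m"
    by (rule choice[THEN exE])
  define J where "J m = Max (insert 0 (K m))" for m
  have F_bound: "\<Union>(F m) \<subseteq> S m (J m)" for m
  proof
    fix x assume "x \<in> \<Union>(F m)"
    then obtain k j where "k \<in> K m" "j \<le> k" "x \<in> Q m j" using K unfolding S_def by auto
    moreover have "k \<le> J m" using K \<open>k \<in> K m\<close> unfolding J_def by simp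
    ultimately show "x \<in> S m (J m)" unfolding S_def by auto
  qed
  show thesis
  proof (rule that)
    fix x assume "x \<in> topspace X"
    then have "finite {m. x \<notin> \<Union>(F m)}" using few by blast
    moreover have "{m. x \<notin> S m (J m)} \<subseteq> {m. x \<notin> \<Union>(F m)}" using F_bound by blast
    ultimately show "finite {m. x \<notin> (\<Union>j\<le>J m. Q m j)}"
      unfolding S_def by (rule finite_subset[rotated])
  qed
qed

lemma Sc_hurewicz_rowsE:
  fixes U :: "nat \<Rightarrow> nat \<Rightarrow> 'a set"
  assumes Sc: "Sc_nbd X m e (open_cover X)" and hur: "hurewicz X"
    and nbhds: "\<And>k j. nbhd X e (U k j)"
  obtains D J where "\<And>k j. pairwise disjnt (D k j)" "\<And>k j A. A \<in> D k j \<Longrightarrow> openin X A"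
    "\<And>k j A. A \<in> D k j \<Longrightarrow> \<exists>x\<in>topspace X. A \<subseteq> m x ` U k j"
    "\<And>x. x \<in> topspace X \<Longrightarrow> finite {k. x \<notin> (\<Union>j\<le>J k. \<Union>(D k j))}"
proof -
  obtain D where D: "\<And>k j. pairwise disjnt (D k j)" "\<And>k j A. A \<in> D k j \<Longrightarrow> openin X A"
    "\<And>k j A. A \<in> D k j \<Longrightarrow> \<exists>x\<in>topspace X. A \<subseteq> m x ` U k j" "\<And>k. open_cover X (\<Union>j. D k j)"
    by (rule Sc_nbd_rowsE[OF Sc nbhds]) (rule that)
  have D_open: "\<And>k j. openin X (\<Union>(D k j))" by (rule openin_Union) (rule D(2))
  have D_cover: "topspace X \<subseteq> (\<Union>j. \<Union>(D k j))" for k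
    using D(4)[of k] unfolding open_cover_def by blast
  obtain J where J: "\<And>x. x \<in> topspace X \<Longrightarrow> finite {k. x \<notin> (\<Union>j\<le>J k. \<Union>(D k j))}"
    by (rule hurewicz_uniform_stages[OF hur D_open D_cover]) (rule that)
  show thesis by (rule that[OF D(1-3) J])
qed

lemma pairwise_disjnt_point_finite:
  assumes "pairwise disjnt C"
  shows "finite {U \<in> C. y \<in> U}"
proof (cases "\<exists>A\<in>C. y \<in> A")
  case True
  then obtain A where A: "A \<in> C" "y \<in> A" by blast
  have "U = A" if "U \<in> C" "y \<in> U" for U
  proof (rule ccontr)
    assume "U \<noteq> A"
    then have "disjnt U A" using assms \<open>U \<in> C\<close> A(1) unfolding pairwise_def by blast
    then show False using \<open>y \<in> U\<close> A(2) unfolding disjnt_def by blast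
  qed
  then have "{U \<in> C. y \<in> U} \<subseteq> {A}" by blast
  then show ?thesis by (rule finite_subset) simp
next
  case False
  then have "{U \<in> C. y \<in> U} = {}" by blast
  then show ?thesis by (metis finite.emptyI)
qed

lemma disjoint_families_infinite_index:
  assumes disj: "\<And>m. pairwise disjnt (C m)"
    and inf: "infinite {U \<in> (\<Union>m. C m). y \<in> U}"
  shows "infinite {m. y \<in> \<Union>(C m)}"
proof
  assume fin: "finite {m. y \<in> \<Union>(C m)}"
  have "{U \<in> (\<Union>m. C m). y \<in> U} \<subseteq> (\<Union>m\<in>{m. y \<in> \<Union>(C m)}. {U \<in> C m. y \<in> U})"
    by blast
  moreover have "finite (\<Union>m\<in>{m. y \<in> \<Union>(C m)}. {U \<in> C m. y \<in> U})"
    by (intro finite_UN_I fin pairwise_disjnt_point_finite disj)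
  ultimately show False using inf finite_subset by blast
qed

definition box_family ::
  "(nat \<Rightarrow> nat \<Rightarrow> 'a set set) \<Rightarrow> (nat \<Rightarrow> 'b set set) \<Rightarrow> (nat \<Rightarrow> nat) \<Rightarrow> nat \<Rightarrow> ('a \<times> 'b) set set"
  where "box_family D C J n =
    {A \<times> E | A E. \<exists>m j. n = prod_encode (m, j) \<and> j \<le> J m \<and> A \<in> D m j \<and> E \<in> C m}"

text \<open>All boxes of one stage come from the same D m j and C m (prod_encode is injective),
  so two distinct boxes differ in a factor, and those factors are disjoint.\<close>

lemma box_family_disjoint:
  assumes "\<And>m j. pairwise disjnt (D m j)" and "\<And>m. pairwise disjnt (C m)"
  shows "pairwise disjnt (box_family D C J n)"
proof (unfold pairwise_def, intro ballI impI)
  fix P Q assume P: "P \<in> box_family D C J n" and Q: "Q \<in> box_family D C J n" and "P \<noteq> Q"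
  obtain A E m j where 1: "P = A \<times> E" "n = prod_encode (m, j)" "A \<in> D m j" "E \<in> C m"
    using P unfolding box_family_def by blast
  obtain A' E' m' j' where 2: "Q = A' \<times> E'" "n = prod_encode (m', j')" "A' \<in> D m' j'" "E' \<in> C m'"
    using Q unfolding box_family_def by blast
  have "m' = m" "j' = j" using 1(2) 2(2) prod_encode_eq by auto
  then have "disjnt A A' \<or> disjnt E E'"
    using 1 2 \<open>P \<noteq> Q\<close> assms unfolding pairwise_def by metis
  then show "disjnt P Q" using 1(1) 2(1) unfolding disjnt_def by auto
qed

lemma box_family_openin:
  assumes "\<And>m j A. A \<in> D m j \<Longrightarrow> openin X A" and "\<And>m E. E \<in> C m \<Longrightarrow> openin Y E"
    and "P \<in> box_family D C J n"
  shows "openin (prod_topology X Y) P"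
  using assms unfolding box_family_def by (auto simp: openin_prod_Times_iff)

lemma translate_box:
  assumes "A \<subseteq> mG a ` U" and "E \<subseteq> mH b ` V" and "U \<times> V \<subseteq> W"
  shows "A \<times> E \<subseteq> prod_mult mG mH (a, b) ` W"
proof
  fix z assume "z \<in> A \<times> E"
  then obtain u v where "u \<in> U" "v \<in> V" "z = (mG a u, mH b v)" using assms(1,2) by blast
  then show "z \<in> prod_mult mG mH (a, b) ` W"
    using assms(3) unfolding prod_mult_def by (auto intro!: image_eqI[of _ _ "(u, v)"])
qed

lemma box_family_refines:
  assumes D: "\<And>m j A. A \<in> D m j \<Longrightarrow> \<exists>a\<in>topspace X. A \<subseteq> mG a ` U (prod_encode (m, j))"
    and C: "\<And>m E. E \<in> C m \<Longrightarrow> \<exists>b\<in>topspace Y. E \<subseteq> mH b ` V' m"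
    and V': "\<And>m j. j \<le> J m \<Longrightarrow> V' m \<subseteq> V (prod_encode (m, j))"
    and box: "\<And>n. U n \<times> V n \<subseteq> W n"
    and P: "P \<in> box_family D C J n"
  shows "\<exists>z\<in>topspace (prod_topology X Y). P \<subseteq> prod_mult mG mH z ` W n"
proof -
  obtain A E m j where 1: "P = A \<times> E" "n = prod_encode (m, j)" "j \<le> J m" "A \<in> D m j" "E \<in> C m"
    using P unfolding box_family_def by blast
  obtain a where a: "a \<in> topspace X" "A \<subseteq> mG a ` U n" using D[OF 1(4)] 1(2) by blast
  obtain b where b: "b \<in> topspace Y" "E \<subseteq> mH b ` V n" using C[OF 1(5)] V'[OF 1(3)] 1(2) by blast
  have "P \<subseteq> prod_mult mG mH (a, b) ` W n"
    using translate_box[of A mG a "U n" E mH b "V n" "W n"] a(2) b(2) box[of n] 1(1) by simp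
  with a(1) b(1) show ?thesis by auto
qed

text \<open>Covering: for (x, y), cofinitely many m have x in some A \<in> D m j with j \<le> J m, and
  infinitely many m have y in some E \<in> C m; any common m gives a box around (x, y).\<close>

lemma box_family_cover:
  assumes D_open: "\<And>m j A. A \<in> D m j \<Longrightarrow> openin X A"
    and C_open: "\<And>m E. E \<in> C m \<Longrightarrow> openin Y E"
    and D_stage: "\<And>x. x \<in> topspace X \<Longrightarrow> finite {m. x \<notin> (\<Union>j\<le>J m. \<Union>(D m j))}"
    and C_disj: "\<And>m. pairwise disjnt (C m)"
    and C_large: "large_cover Y (\<Union>m. C m)"
  shows "open_cover (prod_topology X Y) (\<Union>n. box_family D C J n)"
  unfolding open_cover_def
proof (intro conjI ballI subsetI)
  fix P assume "P \<in> (\<Union>n. box_family D C J n)"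
  then show "openin (prod_topology X Y) P"
    using box_family_openin[where D = D and C = C and J = J] D_open C_open by blast
next
  fix z assume "z \<in> topspace (prod_topology X Y)"
  then obtain x y where z: "z = (x, y)" "x \<in> topspace X" "y \<in> topspace Y" by auto
  have "infinite {m. y \<in> \<Union>(C m)}"
    using disjoint_families_infinite_index[where C = C, OF C_disj] C_large z(3)
    unfolding large_cover_def by blast
  then have "infinite ({m. y \<in> \<Union>(C m)} - {m. x \<notin> (\<Union>j\<le>J m. \<Union>(D m j))})"
    by (rule Diff_infinite_finite[OF D_stage[OF z(2)]])
  then obtain m where "y \<in> \<Union>(C m)" "x \<in> (\<Union>j\<le>J m. \<Union>(D m j))"
    by (metis (no_types, lifting) Diff_iff ex_in_conv infinite_imp_nonempty mem_Collect_eq)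
  then obtain j A E where "j \<le> J m" "A \<in> D m j" "x \<in> A" "E \<in> C m" "y \<in> E" by blast
  then have "A \<times> E \<in> box_family D C J (prod_encode (m, j))" "z \<in> A \<times> E"
    unfolding box_family_def using z(1) by auto
  then show "z \<in> \<Union>(\<Union>n. box_family D C J n)" by blast
qed

lemma box_family_selection:
  assumes D_disj: "\<And>m j. pairwise disjnt (D m j)" and D_open: "\<And>m j A. A \<in> D m j \<Longrightarrow> openin X A"
    and D_ref: "\<And>m j A. A \<in> D m j \<Longrightarrow> \<exists>a\<in>topspace X. A \<subseteq> mG a ` U (prod_encode (m, j))"
    and D_stage: "\<And>x. x \<in> topspace X \<Longrightarrow> finite {m. x \<notin> (\<Union>j\<le>J m. \<Union>(D m j))}"
    and C_disj: "\<And>m. pairwise disjnt (C m)" and C_open: "\<And>m E. E \<in> C m \<Longrightarrow> openin Y E"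
    and C_ref: "\<And>m E. E \<in> C m \<Longrightarrow> \<exists>b\<in>topspace Y. E \<subseteq> mH b ` V' m"
    and C_large: "large_cover Y (\<Union>m. C m)"
    and V': "\<And>m j. j \<le> J m \<Longrightarrow> V' m \<subseteq> V (prod_encode (m, j))"
    and box: "\<And>n. U n \<times> V n \<subseteq> W n"
  shows "\<exists>B. (\<forall>n. pairwise disjnt (B n)) \<and> (\<forall>n. \<forall>P\<in>B n. openin (prod_topology X Y) P) \<and>
    (\<forall>n. \<forall>P\<in>B n. \<exists>z\<in>topspace (prod_topology X Y). P \<subseteq> prod_mult mG mH z ` W n) \<and>
    open_cover (prod_topology X Y) (\<Union>n. B n)"
proof (intro exI[of _ "box_family D C J"] conjI allI ballI)
  fix n P assume P: "P \<in> box_family D C J n"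
  show "openin (prod_topology X Y) P"
    by (rule box_family_openin[where D = D and C = C and J = J, OF D_open C_open P])
  show "\<exists>z\<in>topspace (prod_topology X Y). P \<subseteq> prod_mult mG mH z ` W n"
    by (rule box_family_refines[where D = D and C = C and J = J and V' = V' and U = U
        and V = V and W = W and mG = mG and mH = mH and X = X and Y = Y,
        OF D_ref C_ref V' box P])
qed (use box_family_disjoint[where J = J, OF D_disj C_disj]
    box_family_cover[where D = D and C = C and J = J, OF D_open C_open D_stage C_disj C_large]
    in auto)

theorem theorem3p5:
  fixes G :: "'a topology" and mG :: "'a \<Rightarrow> 'a \<Rightarrow> 'a" and eG :: 'a and iG :: "'a \<Rightarrow> 'a"
    and H :: "'b topology" and mH :: "'b \<Rightarrow> 'b \<Rightarrow> 'b" and eH :: 'b and iH :: "'b \<Rightarrow> 'b"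
  assumes "topological_group G mG eG iG"
    and "Sc_nbd G mG eG (open_cover G)"
    and "hurewicz G"
    and "topological_group H mH eH iH"
    and "Sc_nbd H mH eH (large_cover H)"
  shows "Sc_nbd (prod_topology G H) (prod_mult mG mH) (eG, eH) (open_cover (prod_topology G H))"
  unfolding Sc_nbd_def
proof (intro allI impI)
  fix W :: "nat \<Rightarrow> ('a \<times> 'b) set"
  assume W: "\<forall>n. nbhd (prod_topology G H) (eG, eH) (W n)"
  obtain U V where U: "\<And>n. openin G (U n) \<and> eG \<in> U n"
    and V: "\<And>n. openin H (V n) \<and> eH \<in> V n" and box: "\<And>n. U n \<times> V n \<subseteq> W n"
    by (rule nbhd_prod_contains_boxes[where W = W, OF W[rule_format]]) (rule that)
  have U_nbhd: "\<And>m j. nbhd G eG (U (prod_encode (m, j)))" using U by (simp add: nbhd_openin)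
  obtain D J where D: "\<And>m j. pairwise disjnt (D m j)" "\<And>m j A. A \<in> D m j \<Longrightarrow> openin G A"
      "\<And>m j A. A \<in> D m j \<Longrightarrow> \<exists>a\<in>topspace G. A \<subseteq> mG a ` U (prod_encode (m, j))"
      "\<And>x. x \<in> topspace G \<Longrightarrow> finite {m. x \<notin> (\<Union>j\<le>J m. \<Union>(D m j))}"
    by (rule Sc_hurewicz_rowsE[where U = "\<lambda>m j. U (prod_encode (m, j))", OF assms(2,3) U_nbhd])
      (rule that)
  define V' where "V' m = (\<Inter>j\<le>J m. V (prod_encode (m, j)))" for m
  have V'_sub: "\<And>m j. j \<le> J m \<Longrightarrow> V' m \<subseteq> V (prod_encode (m, j))" unfolding V'_def by blast
  have V'_nbhd: "nbhd H eH (V' m)" for m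
    unfolding V'_def using V by (intro nbhd_openin openin_Inter) auto
  obtain C where C: "\<And>m. pairwise disjnt (C m)" "\<And>m E. E \<in> C m \<Longrightarrow> openin H E"
      "\<And>m E. E \<in> C m \<Longrightarrow> \<exists>b\<in>topspace H. E \<subseteq> mH b ` V' m" "large_cover H (\<Union>m. C m)"
    by (rule Sc_nbdE[where U = V', OF assms(5) V'_nbhd]) (rule that)
  show "\<exists>B. (\<forall>n. pairwise disjnt (B n)) \<and> (\<forall>n. \<forall>P\<in>B n. openin (prod_topology G H) P) \<and>
      (\<forall>n. \<forall>P\<in>B n. \<exists>z\<in>topspace (prod_topology G H). P \<subseteq> prod_mult mG mH z ` W n) \<and>
      open_cover (prod_topology G H) (\<Union>n. B n)"
    by (rule box_family_selection[where U = U and V = V and W = W and V' = V',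
        OF D C V'_sub box])
qed

end
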